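(* Let $m,n,s,k$ be integers such that $2\leqslant s\leqslant n$, $2\leqslant k\leqslant m$ and $ms=nk$. Let $c\geqslant 1$ and let $\Gamma$ be an abelian group of order $nkc$. Then there exists an $\mathrm{MRS}_\Gamma(m,n;s,k;c)$ in each of the following cases: (1) $s\equiv k\equiv 0\pmod 4$; (2) $s\equiv 2\pmod 4$ and $k\equiv 0\pmod 4$; (3) $s\equiv 0\pmod 4$ and $k\equiv 2\pmod 4$; (4) $s\equiv k\equiv 2\pmod 4$ and $m\equiv n\equiv 0\pmod 2$.
   Context: For positive integers $m,n,s,k,c$ and an abelian group $\Gamma$ of order $nkc$, an $\mathrm{MRS}_\Gamma(m,n;s,k;c)$ is a set of $c$ partially filled $m\times n$ arrays (some cells may be empty) with entries in $\Gamma$ such that: every element of $\Gamma$ appears exactly once and in a unique array; in every array each row contains exactly $s$ filled cells and each column contains exactly $k$ filled cells; and there exist $\omega,\delta\in\Gamma$ such that in every array each row sum is $\omega$ and each column sum is $\delta$. *)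

theory Defs
  imports "HOL-Algebra.FiniteProduct"
begin

text \<open>A family of c partially filled m x n arrays with entries in the group G is a
function A: A t i j = None means cell (i,j) of array t is empty, Some g means it
contains g. Only indices t < c, i < m, j < n are relevant. The group operation
of G (written multiplicatively in HOL-Algebra) plays the role of the sum.\<close>

definition filled_cells :: "(nat \<Rightarrow> nat \<Rightarrow> nat \<Rightarrow> 'a option) \<Rightarrow> nat \<Rightarrow> nat \<Rightarrow> nat \<Rightarrow> (nat \<times> nat \<times> nat) set" where
  "filled_cells A c m n = {(t, i, j). t < c \<and> i < m \<and> j < n \<and> A t i j \<noteq> None}"

definition is_MRS ::
  "('a, 'b) monoid_scheme \<Rightarrow> nat \<Rightarrow> nat \<Rightarrow> nat \<Rightarrow> nat \<Rightarrow> nat \<Rightarrow>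
   (nat \<Rightarrow> nat \<Rightarrow> nat \<Rightarrow> 'a option) \<Rightarrow> bool" where
  "is_MRS G m n s k c A \<longleftrightarrow>
     card (carrier G) = n * k * c \<and>
     \<comment> \<open>all entries lie in the group\<close>
     (\<forall>t<c. \<forall>i<m. \<forall>j<n. \<forall>g. A t i j = Some g \<longrightarrow> g \<in> carrier G) \<and>
     \<comment> \<open>every group element appears exactly once, in a unique array\<close>
     (\<forall>g\<in>carrier G. \<exists>!p. p \<in> filled_cells A c m n \<and>
          (case p of (t, i, j) \<Rightarrow> A t i j = Some g)) \<and>
     \<comment> \<open>each row has exactly s filled cells, each column exactly k\<close>
     (\<forall>t<c. \<forall>i<m. card {j. j < n \<and> A t i j \<noteq> None} = s) \<and>
     (\<forall>t<c. \<forall>j<n. card {i. i < m \<and> A t i j \<noteq> None} = k) \<and>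
     \<comment> \<open>common row sum \<omega> and common column sum \<delta>\<close>
     (\<exists>\<omega>\<in>carrier G. \<exists>\<delta>\<in>carrier G.
        (\<forall>t<c. \<forall>i<m. finprod G (\<lambda>j. the (A t i j)) {j. j < n \<and> A t i j \<noteq> None} = \<omega>) \<and>
        (\<forall>t<c. \<forall>j<n. finprod G (\<lambda>i. the (A t i j)) {i. i < m \<and> A t i j \<noteq> None} = \<delta>))"

definition MRS_exists ::
  "('a, 'b) monoid_scheme \<Rightarrow> nat \<Rightarrow> nat \<Rightarrow> nat \<Rightarrow> nat \<Rightarrow> nat \<Rightarrow> bool" where
  "MRS_exists G m n s k c \<longleftrightarrow> (\<exists>A. is_MRS G m n s k c A)"

end

(*
  If 4 divides |G|, then G contains two distinct non-squares sigma and tau with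
  sigma^2 = tau^2. The point reflections x |-> sigma x^-1 and x |-> tau x^-1 are then
  commuting involutions which, together with their product x |-> sigma tau^-1 x, have no
  fixed points; so G splits into orbits of size four of this Klein four-group action.

  Every array is filled cyclically: its p-th entry goes to row p div s and column
  p mod n. Flipping the lowest binary digit of p keeps the row (s is even), and
  flipping the lowest digit of p div 2h keeps the column (n divides 2h). The four
  positions reachable by these two flips receive the four elements of one orbit, so
  that a flip of the first kind corresponds to x |-> sigma x^-1 and one of the second
  kind to x |-> tau x^-1. Hence row partners multiply to sigma and column partners to
  tau: every row has product sigma^(s/2) and every column tau^(k/2). The congruence
  conditions guarantee that s is even and that some h with n | 2h and 4h | nk exists.
*)
theory Submission
  imports Defs "HOL-Algebra.Coset"
begin

lemma bij_betw_if_inj_on_card_eq: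
  assumes "inj_on f A" "f ` A \<subseteq> B" "finite B" "card A = card B"
  shows "bij_betw f A B"
  using assms by (metis bij_betw_imageI card_image card_subset_eq)

section \<open>Fixed-point-free involutions\<close>

definition fixpoint_free_involution_on :: "('a \<Rightarrow> 'a) \<Rightarrow> 'a set \<Rightarrow> bool" where
  "fixpoint_free_involution_on \<pi> S \<longleftrightarrow> (\<forall>x\<in>S. \<pi> x \<in> S \<and> \<pi> (\<pi> x) = x \<and> \<pi> x \<noteq> x)"

lemma fixpoint_free_involution_on_remove_pair:
  assumes "fixpoint_free_involution_on \<pi> S" "x \<in> S"
  shows "fixpoint_free_involution_on \<pi> (S - {x, \<pi> x})"
  using assms unfolding fixpoint_free_involution_on_def by (auto dest: arg_cong[of _ _ \<pi>])

lemma fixpoint_free_involution_on_fibre: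
  assumes "fixpoint_free_involution_on \<pi> S" "\<And>x. x \<in> S \<Longrightarrow> g (\<pi> x) = g x"
  shows "fixpoint_free_involution_on \<pi> {x \<in> S. g x = y}"
  using assms unfolding fixpoint_free_involution_on_def by auto

lemma fixpoint_free_involution_induct [consumes 2, case_names empty pair]:
  assumes "finite S" and "fixpoint_free_involution_on \<pi> S"
    and empty: "P {}"
    and pair: "\<And>x S. finite S \<Longrightarrow> x \<notin> S \<Longrightarrow> \<pi> x \<notin> S \<Longrightarrow> \<pi> x \<noteq> x \<Longrightarrow> P S
                 \<Longrightarrow> P (insert x (insert (\<pi> x) S))"
  shows "P S"
  using assms(1,2)
proof (induction "card S" arbitrary: S rule: less_induct)
  case less
  show ?case
  proof (cases "S = {}")
    case True
    then show ?thesis using empty by simp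
  next
    case False
    then obtain x where x: "x \<in> S" by blast
    have \<pi>x: "\<pi> x \<in> S" "\<pi> x \<noteq> x"
      using less.prems(2) x unfolding fixpoint_free_involution_on_def by auto
    define S' where "S' = S - {x, \<pi> x}"
    have "P S'"
    proof (rule less.hyps)
      show "card S' < card S"
        unfolding S'_def using x less.prems(1) by (intro psubset_card_mono) auto
      show "finite S'"
        unfolding S'_def using less.prems(1) by simp
      show "fixpoint_free_involution_on \<pi> S'"
        unfolding S'_def using less.prems(2) x by (rule fixpoint_free_involution_on_remove_pair)
    qed
    moreover have "finite S'" "x \<notin> S'" "\<pi> x \<notin> S'"
      unfolding S'_def using less.prems(1) by auto
    ultimately have "P (insert x (insert (\<pi> x) S'))"
      using pair \<pi>x(2) by blast
    moreover have "insert x (insert (\<pi> x) S') = S"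
      using x \<pi>x unfolding S'_def by auto
    ultimately show ?thesis by simp
  qed
qed

lemma even_card_fixpoint_free_involution:
  assumes "finite S" and "fixpoint_free_involution_on \<pi> S"
  shows "even (card S)"
  using assms by (induction rule: fixpoint_free_involution_induct) auto

lemma (in comm_group) finprod_fixpoint_free_involution:
  assumes "finite S" and "fixpoint_free_involution_on \<pi> S"
    and "f \<in> S \<rightarrow> carrier G" and "a \<in> carrier G"
    and "\<And>x. x \<in> S \<Longrightarrow> f x \<otimes> f (\<pi> x) = a"
  shows "finprod G f S = a [^] (card S div 2)"
  using assms
proof (induction rule: fixpoint_free_involution_induct)
  case empty
  then show ?case by simp
next
  case (pair x S)
  have f: "f x \<in> carrier G" "f (\<pi> x) \<in> carrier G" "f \<in> S \<rightarrow> carrier G"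
    using pair.prems(1) by auto
  have IH: "finprod G f S = a [^] (card S div 2)"
    using f(3) pair.prems(2,3) by (intro pair.IH) auto
  have "finprod G f (insert x (insert (\<pi> x) S)) = f x \<otimes> (f (\<pi> x) \<otimes> finprod G f S)"
    using pair.hyps f by (simp add: finprod_insert)
  also have "\<dots> = (f x \<otimes> f (\<pi> x)) \<otimes> a [^] (card S div 2)"
    using f pair.prems(2) by (simp add: IH m_assoc)
  also have "\<dots> = a \<otimes> a [^] (card S div 2)"
    using pair.prems(3)[of x] by simp
  also have "\<dots> = a [^] Suc (card S div 2)"
    using pair.prems(2) by (simp add: m_comm)
  also have "Suc (card S div 2) = card (insert x (insert (\<pi> x) S)) div 2"
    using pair.hyps by simp
  finally show ?case .
qed

section \<open>Non-squares in finite abelian groups\<close>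

lemma (in comm_group) subgroup_squares: "subgroup ((\<lambda>x. x \<otimes> x) ` carrier G) G"
proof -
  have "(\<lambda>x. x \<otimes> x) \<in> hom G G"
    by (rule homI) (auto simp: m_ac)
  then show ?thesis
    by (intro group_hom.img_is_subgroup) (simp add: group_hom_axioms_def group_hom_def is_group)
qed

lemma (in comm_group) card_squares_mult_card_square_roots_one:
  "card ((\<lambda>x. x \<otimes> x) ` carrier G) * card {x \<in> carrier G. x \<otimes> x = \<one>} = order G"
proof -
  let ?D = "(\<lambda>x. x \<otimes> x) ` carrier G"
  interpret D: group "G\<lparr>carrier := ?D\<rparr>"
    using subgroup_squares by (rule subgroup.subgroup_is_group) (rule is_group)
  interpret square_onto: group_hom G "G\<lparr>carrier := ?D\<rparr>" "\<lambda>x. x \<otimes> x"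
    by unfold_locales (auto intro!: homI simp: m_ac)
  have kernel: "kernel G (G\<lparr>carrier := ?D\<rparr>) (\<lambda>x. x \<otimes> x) = {x \<in> carrier G. x \<otimes> x = \<one>}"
    by (simp add: kernel_def)
  have "G Mod {x \<in> carrier G. x \<otimes> x = \<one>} \<cong> G\<lparr>carrier := ?D\<rparr>"
    using square_onto.FactGroup_iso by (simp add: kernel)
  then have "card (rcosets {x \<in> carrier G. x \<otimes> x = \<one>}) = card ?D"
    by (auto dest: iso_same_card simp: FactGroup_def)
  with lagrange[OF square_onto.subgroup_kernel] show ?thesis
    by (simp add: kernel)
qed

lemma (in group) exists_involution_if_even_card:
  assumes "subgroup H G" "finite H" "even (card H)"
  shows "\<exists>d\<in>H. d \<noteq> \<one> \<and> d \<otimes> d = \<one>"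
proof (rule ccontr)
  assume no_involution: "\<not> (\<exists>d\<in>H. d \<noteq> \<one> \<and> d \<otimes> d = \<one>)"
  have "fixpoint_free_involution_on (\<lambda>x. inv x) (H - {\<one>})"
    unfolding fixpoint_free_involution_on_def
  proof (intro ballI conjI)
    fix x assume x: "x \<in> H - {\<one>}"
    then have "x \<in> carrier G"
      using subgroup.subset[OF assms(1)] by blast
    then show "inv x \<in> H - {\<one>}" "inv (inv x) = x"
      using x subgroup.m_inv_closed[OF assms(1)] by auto
    show "inv x \<noteq> x"
    proof
      assume "inv x = x"
      then have "x \<otimes> x = \<one>"
        using r_inv[OF \<open>x \<in> carrier G\<close>] by simp
      then show False
        using x no_involution by blast
    qed
  qed
  then have "even (card (H - {\<one>}))"
    using assms(2) by (intro even_card_fixpoint_free_involution) auto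
  moreover have "card H = Suc (card (H - {\<one>}))"
    by (rule card.remove[OF assms(2) subgroup.one_closed[OF assms(1)]])
  ultimately show False
    using assms(3) by simp
qed

lemma (in comm_group) exists_involution_square_if_unique_involution:
  assumes "finite (carrier G)" "4 dvd order G" "card {x \<in> carrier G. x \<otimes> x = \<one>} = 2"
  shows "\<exists>d\<in>(\<lambda>x. x \<otimes> x) ` carrier G. d \<noteq> \<one> \<and> d \<otimes> d = \<one>"
proof (rule exists_involution_if_even_card[OF subgroup_squares])
  show "finite ((\<lambda>x. x \<otimes> x) ` carrier G)"
    using assms(1) by simp
  show "even (card ((\<lambda>x. x \<otimes> x) ` carrier G))"
  proof -
    have "card ((\<lambda>x. x \<otimes> x) ` carrier G) * 2 = order G"
      using card_squares_mult_card_square_roots_one assms(3) by simp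
    with assms(2) show ?thesis
      by presburger
  qed
qed

lemma (in comm_group) exists_involution_card_squares_union_less:
  assumes "finite (carrier G)" "4 dvd order G"
  shows "\<exists>d\<in>carrier G. d \<noteq> \<one> \<and> d \<otimes> d = \<one> \<and>
           card ((\<lambda>x. x \<otimes> x) ` carrier G \<union> (\<lambda>y. d \<otimes> y) ` (\<lambda>x. x \<otimes> x) ` carrier G) < order G"
proof -
  define D where "D = (\<lambda>x. x \<otimes> x) ` carrier G"
  define K where "K = {x \<in> carrier G. x \<otimes> x = \<one>}"
  have DK: "card D * card K = order G"
    unfolding D_def K_def by (rule card_squares_mult_card_square_roots_one)
  have D: "subgroup D G"
    unfolding D_def by (rule subgroup_squares)
  have "card D > 0"
    using assms(1) subgroup.one_closed[OF D] by (auto simp: card_gt_0_iff D_def)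
  \<comment> \<open>If there is only one involution, D has index 2 and contains it, so its translate is D
    itself; otherwise D has index at least 3 and D together with one translate cannot cover G.\<close>
  have "\<exists>d\<in>carrier G. d \<noteq> \<one> \<and> d \<otimes> d = \<one> \<and> card (D \<union> (\<lambda>y. d \<otimes> y) ` D) < order G"
  proof (cases "card K = 2")
    case True
    then obtain d where d: "d \<in> D" "d \<noteq> \<one>" "d \<otimes> d = \<one>"
      using exists_involution_square_if_unique_involution[OF assms] unfolding D_def K_def by blast
    have "(\<lambda>y. d \<otimes> y) ` D \<subseteq> D"
      using subgroup.m_closed[OF D d(1)] by blast
    then have "card (D \<union> (\<lambda>y. d \<otimes> y) ` D) < order G"
      using DK True \<open>card D > 0\<close> by (simp add: Un_absorb2)
    then show ?thesis
      using d subgroup.mem_carrier[OF D d(1)] by blast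
  next
    case False
    have "even (order G)"
      using assms(2) by (simp add: dvd_trans[of 2 4])
    then obtain d where d: "d \<in> carrier G" "d \<noteq> \<one>" "d \<otimes> d = \<one>"
      using exists_involution_if_even_card[OF subgroup_self assms(1)] by (auto simp: order_def)
    then have "2 \<le> card K"
      using assms(1) card_mono[of K "{\<one>, d}"] unfolding K_def by simp
    then have "card D * 3 \<le> order G"
      using False DK by (metis mult_le_mono2 Suc_leI le_neq_implies_less numeral_2_eq_2 numeral_3_eq_3)
    moreover have "card (D \<union> (\<lambda>y. d \<otimes> y) ` D) \<le> card D + card D"
      using card_Un_le[of D "(\<lambda>y. d \<otimes> y) ` D"] card_image_le[of D "\<lambda>y. d \<otimes> y"] assms(1)
      unfolding D_def by simp
    ultimately show ?thesis
      using d \<open>card D > 0\<close> by auto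
  qed
  then show ?thesis
    unfolding D_def .
qed

lemma (in comm_group) exists_distinct_nonsquares_with_equal_squares:
  assumes "finite (carrier G)" "4 dvd order G"
  shows "\<exists>\<sigma>\<in>carrier G. \<exists>\<tau>\<in>carrier G. \<sigma> \<noteq> \<tau> \<and> \<sigma> \<otimes> \<sigma> = \<tau> \<otimes> \<tau> \<and>
           (\<forall>x\<in>carrier G. x \<otimes> x \<noteq> \<sigma> \<and> x \<otimes> x \<noteq> \<tau>)"
proof -
  obtain d where d: "d \<in> carrier G" "d \<noteq> \<one>" "d \<otimes> d = \<one>"
    and small: "card ((\<lambda>x. x \<otimes> x) ` carrier G \<union> (\<lambda>y. d \<otimes> y) ` (\<lambda>x. x \<otimes> x) ` carrier G) < order G"
    using exists_involution_card_squares_union_less[OF assms] by blast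
  have "\<not> carrier G \<subseteq> (\<lambda>x. x \<otimes> x) ` carrier G \<union> (\<lambda>y. d \<otimes> y) ` (\<lambda>x. x \<otimes> x) ` carrier G"
  proof
    assume "carrier G \<subseteq> (\<lambda>x. x \<otimes> x) ` carrier G \<union> (\<lambda>y. d \<otimes> y) ` (\<lambda>x. x \<otimes> x) ` carrier G"
    then have "order G \<le> card ((\<lambda>x. x \<otimes> x) ` carrier G \<union> (\<lambda>y. d \<otimes> y) ` (\<lambda>x. x \<otimes> x) ` carrier G)"
      unfolding order_def using assms(1) by (intro card_mono) simp_all
    then show False
      using small by simp
  qed
  then obtain \<sigma> where \<sigma>: "\<sigma> \<in> carrier G" "\<And>x. x \<in> carrier G \<Longrightarrow> x \<otimes> x \<noteq> \<sigma>"
    "\<And>x. x \<in> carrier G \<Longrightarrow> d \<otimes> (x \<otimes> x) \<noteq> \<sigma>"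
    by blast
  have "d \<otimes> \<sigma> \<noteq> \<sigma>"
    using d \<sigma>(1) by (metis l_one r_cancel_one')
  moreover have "(d \<otimes> \<sigma>) \<otimes> (d \<otimes> \<sigma>) = \<sigma> \<otimes> \<sigma>"
    using d \<sigma>(1) by (simp add: m_ac)
  moreover have "x \<otimes> x \<noteq> d \<otimes> \<sigma>" if "x \<in> carrier G" for x
  proof
    assume "x \<otimes> x = d \<otimes> \<sigma>"
    then have "d \<otimes> (x \<otimes> x) = \<sigma>"
      using d \<sigma>(1) by (simp add: m_assoc[symmetric])
    then show False
      using \<sigma>(3) that by blast
  qed
  ultimately show ?thesis
    using d \<sigma> by (intro bexI[of _ \<sigma>] bexI[of _ "d \<otimes> \<sigma>"]) auto
qed

section \<open>A free action of the Klein four-group\<close>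

definition point_reflection :: "('a, 'b) monoid_scheme \<Rightarrow> 'a \<Rightarrow> 'a \<Rightarrow> 'a" where
  "point_reflection G a x = a \<otimes>\<^bsub>G\<^esub> inv\<^bsub>G\<^esub> x"

context comm_group
begin

lemma point_reflection_closed [simp]:
  "a \<in> carrier G \<Longrightarrow> x \<in> carrier G \<Longrightarrow> point_reflection G a x \<in> carrier G"
  unfolding point_reflection_def by simp

lemma point_reflection_point_reflection [simp]:
  "a \<in> carrier G \<Longrightarrow> x \<in> carrier G \<Longrightarrow> point_reflection G a (point_reflection G a x) = x"
  unfolding point_reflection_def by (simp add: inv_mult m_assoc[symmetric])

lemma mult_point_reflection:
  "a \<in> carrier G \<Longrightarrow> x \<in> carrier G \<Longrightarrow> x \<otimes> point_reflection G a x = a"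
  unfolding point_reflection_def by (simp add: m_lcomm)

lemma point_reflection_eq_self_iff:
  assumes "a \<in> carrier G" "x \<in> carrier G"
  shows "point_reflection G a x = x \<longleftrightarrow> x \<otimes> x = a"
  using assms unfolding point_reflection_def by (metis inv_solve_right)

lemma point_reflection_point_reflection_eq_self_iff:
  assumes "a \<in> carrier G" "b \<in> carrier G" "x \<in> carrier G"
  shows "point_reflection G a (point_reflection G b x) = x \<longleftrightarrow> a = b"
  using assms m_lcomm inv_solve_right inv_solve_left inv_solve_left' inv_mult
  unfolding point_reflection_def by simp

lemma point_reflections_commute_if_equal_squares:
  assumes "a \<in> carrier G" "b \<in> carrier G" "a \<otimes> a = b \<otimes> b" "x \<in> carrier G"
  shows "point_reflection G a (point_reflection G b x) = point_reflection G b (point_reflection G a x)"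
proof -
  have "a \<otimes> inv b = b \<otimes> inv a"
    using assms(1-3) by (metis (no_types, opaque_lifting) inv_closed inv_solve_right m_assoc m_closed m_comm)
  then show ?thesis
    using assms unfolding point_reflection_def by (simp add: inv_mult m_assoc[symmetric])
qed

end

text \<open>Equal squares make the reflections in \<open>\<sigma>\<close> and \<open>\<tau>\<close> commute; non-squareness
  and \<open>\<sigma> \<noteq> \<tau>\<close> make the generated Klein four-group act freely.\<close>

locale nonsquare_pair = comm_group +
  fixes \<sigma> \<tau>
  assumes \<sigma>_closed [simp]: "\<sigma> \<in> carrier G" and \<tau>_closed [simp]: "\<tau> \<in> carrier G"
    and distinct: "\<sigma> \<noteq> \<tau>" and equal_squares: "\<sigma> \<otimes> \<sigma> = \<tau> \<otimes> \<tau>"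
    and \<sigma>_not_square: "x \<in> carrier G \<Longrightarrow> x \<otimes> x \<noteq> \<sigma>"
    and \<tau>_not_square: "x \<in> carrier G \<Longrightarrow> x \<otimes> x \<noteq> \<tau>"
begin

definition klein_act :: "'a \<Rightarrow> bool \<Rightarrow> bool \<Rightarrow> 'a" where
  "klein_act x f b =
     (if f then point_reflection G \<sigma> else id) ((if b then point_reflection G \<tau> else id) x)"

lemma klein_act_closed [simp]: "x \<in> carrier G \<Longrightarrow> klein_act x f b \<in> carrier G"
  unfolding klein_act_def by simp

lemma klein_act_klein_act:
  assumes "x \<in> carrier G"
  shows "klein_act (klein_act x f b) f' b' = klein_act x (f \<noteq> f') (b \<noteq> b')"
  using assms point_reflections_commute_if_equal_squares[OF \<tau>_closed \<sigma>_closed equal_squares[symmetric]]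
  by (cases f; cases b; cases f'; cases b') (simp_all add: klein_act_def)

lemma klein_act_eq_self_iff:
  assumes "x \<in> carrier G"
  shows "klein_act x f b = x \<longleftrightarrow> \<not> f \<and> \<not> b"
  using assms distinct \<sigma>_not_square[OF assms] \<tau>_not_square[OF assms]
  by (cases f; cases b)
    (simp_all add: klein_act_def point_reflection_eq_self_iff point_reflection_point_reflection_eq_self_iff)

lemma klein_act_inj:
  assumes "x \<in> carrier G" "klein_act x f b = klein_act x f' b'"
  shows "f = f' \<and> b = b'"
proof -
  have "klein_act x (f' \<noteq> f) (b' \<noteq> b) = x"
    using klein_act_klein_act[OF assms(1), of f' b' f b] klein_act_klein_act[OF assms(1), of f b f b]
    unfolding assms(2)[symmetric] by (simp add: klein_act_def)
  then show ?thesis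
    using klein_act_eq_self_iff[OF assms(1)] by auto
qed

lemma klein_act_mult_flip_first:
  "x \<in> carrier G \<Longrightarrow> klein_act x f b \<otimes> klein_act x (\<not> f) b = \<sigma>"
  using klein_act_klein_act[of x f b True False] mult_point_reflection[of \<sigma> "klein_act x f b"]
  by (simp add: klein_act_def)

lemma klein_act_mult_flip_second:
  "x \<in> carrier G \<Longrightarrow> klein_act x f b \<otimes> klein_act x f (\<not> b) = \<tau>"
  using klein_act_klein_act[of x f b False True] mult_point_reflection[of \<tau> "klein_act x f b"]
  by (simp add: klein_act_def)

definition klein_orbit :: "'a \<Rightarrow> 'a set" where
  "klein_orbit x = (\<lambda>(f, b). klein_act x f b) ` UNIV"

lemma klein_orbit_subset: "x \<in> carrier G \<Longrightarrow> klein_orbit x \<subseteq> carrier G"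
  unfolding klein_orbit_def by auto

lemma self_in_klein_orbit: "x \<in> klein_orbit x"
  unfolding klein_orbit_def klein_act_def by (auto intro: image_eqI[of _ _ "(False, False)"])

lemma klein_orbit_eq:
  assumes "x \<in> carrier G" "y \<in> klein_orbit x"
  shows "klein_orbit y = klein_orbit x"
proof -
  obtain f b where y: "y = klein_act x f b"
    using assms(2) unfolding klein_orbit_def by auto
  show ?thesis
  proof
    show "klein_orbit y \<subseteq> klein_orbit x"
      unfolding klein_orbit_def y klein_act_klein_act[OF assms(1)] by auto
    show "klein_orbit x \<subseteq> klein_orbit y"
    proof
      fix z assume "z \<in> klein_orbit x"
      then obtain f' b' where "z = klein_act x f' b'"
        unfolding klein_orbit_def by auto
      also have "\<dots> = klein_act y (f \<noteq> f') (b \<noteq> b')"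
        unfolding y klein_act_klein_act[OF assms(1)] by (cases f; cases b) simp_all
      finally show "z \<in> klein_orbit y"
        unfolding klein_orbit_def by auto
    qed
  qed
qed

lemma klein_orbit_eq_if_klein_act_eq:
  assumes "x \<in> carrier G" "y \<in> carrier G" "klein_act x f b = klein_act y f' b'"
  shows "klein_orbit x = klein_orbit y"
proof -
  have "klein_act x f b \<in> klein_orbit x" "klein_act y f' b' \<in> klein_orbit y"
    unfolding klein_orbit_def by (auto intro: image_eqI[of _ _ "(f, b)"] image_eqI[of _ _ "(f', b')"])
  then show ?thesis
    using klein_orbit_eq assms by metis
qed

lemma card_klein_orbit:
  assumes "x \<in> carrier G"
  shows "card (klein_orbit x) = 4"
proof -
  have "inj (\<lambda>(f, b). klein_act x f b)"
    using klein_act_inj[OF assms] by (auto intro!: injI)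
  then show ?thesis
    unfolding klein_orbit_def by (simp add: card_image card_UNIV_bool flip: UNIV_Times_UNIV)
qed

lemma order_eq_four_mult_card_klein_orbits:
  assumes "finite (carrier G)"
  shows "order G = 4 * card (klein_orbit ` carrier G)"
proof -
  have "\<Union> (klein_orbit ` carrier G) = carrier G"
    using klein_orbit_subset self_in_klein_orbit by blast
  moreover have "4 * card (klein_orbit ` carrier G) = card (\<Union> (klein_orbit ` carrier G))"
  proof (rule card_partition)
    fix O1 O2 assume "O1 \<in> klein_orbit ` carrier G" "O2 \<in> klein_orbit ` carrier G" "O1 \<noteq> O2"
    then obtain x y where xy: "x \<in> carrier G" "y \<in> carrier G" "O1 = klein_orbit x" "O2 = klein_orbit y"
      by blast
    show "O1 \<inter> O2 = {}"
    proof (rule ccontr)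
      assume "O1 \<inter> O2 \<noteq> {}"
      then obtain z where "z \<in> klein_orbit x" "z \<in> klein_orbit y"
        using xy by blast
      then have "klein_orbit x = klein_orbit y"
        using klein_orbit_eq xy(1,2) by metis
      then show False
        using \<open>O1 \<noteq> O2\<close> xy by simp
    qed
  qed (use assms card_klein_orbit klein_orbit_subset in \<open>auto intro: finite_subset\<close>)
  ultimately show ?thesis
    unfolding order_def by simp
qed

lemma exists_klein_equivariant_bij:
  assumes "finite (carrier G)" "finite I" "order G = 4 * card I"
  obtains \<Psi> where "bij_betw \<Psi> (I \<times> UNIV) (carrier G)"
    and "\<And>i f b. i \<in> I \<Longrightarrow> \<Psi> (i, f, b) \<otimes> \<Psi> (i, \<not> f, b) = \<sigma>"
    and "\<And>i f b. i \<in> I \<Longrightarrow> \<Psi> (i, f, b) \<otimes> \<Psi> (i, f, \<not> b) = \<tau>"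
proof -
  have "card I = card (klein_orbit ` carrier G)"
    using assms order_eq_four_mult_card_klein_orbits by simp
  then obtain g where g: "bij_betw g I (klein_orbit ` carrier G)"
    using assms(1,2) finite_same_card_bij by blast
  then have "\<forall>i\<in>I. \<exists>x\<in>carrier G. g i = klein_orbit x"
    using bij_betwE by blast
  then obtain rep where rep: "\<And>i. i \<in> I \<Longrightarrow> rep i \<in> carrier G" "\<And>i. i \<in> I \<Longrightarrow> g i = klein_orbit (rep i)"
    by metis
  define \<Psi> where "\<Psi> = (\<lambda>(i, f, b). klein_act (rep i) f b)"
  have "inj_on \<Psi> (I \<times> UNIV)"
  proof (rule inj_onI)
    fix x y assume "x \<in> I \<times> UNIV" "y \<in> I \<times> UNIV" "\<Psi> x = \<Psi> y"
    then obtain i f b i' f' b' where xy: "x = (i, f, b)" "y = (i', f', b')"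
      and i: "i \<in> I" "i' \<in> I" and eq: "\<Psi> (i, f, b) = \<Psi> (i', f', b')"
      by (metis mem_Sigma_iff prod_cases3)
    have "klein_orbit (rep i) = klein_orbit (rep i')"
      using klein_orbit_eq_if_klein_act_eq rep(1) i eq unfolding \<Psi>_def by simp
    then have "i = i'"
      using g i rep(2) by (metis bij_betw_def inj_on_def)
    then show "x = y"
      unfolding xy using klein_act_inj[OF rep(1)[OF i(1)]] eq unfolding \<Psi>_def by simp
  qed
  moreover have "\<Psi> ` (I \<times> UNIV) \<subseteq> carrier G"
    using rep(1) unfolding \<Psi>_def by auto
  moreover have "card (I \<times> (UNIV :: (bool \<times> bool) set)) = card (carrier G)"
    using assms(3) by (simp add: card_cartesian_product card_UNIV_bool order_def flip: UNIV_Times_UNIV)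
  ultimately have "bij_betw \<Psi> (I \<times> UNIV) (carrier G)"
    by (rule bij_betw_if_inj_on_card_eq[OF _ _ assms(1)])
  moreover have "\<Psi> (i, f, b) \<otimes> \<Psi> (i, \<not> f, b) = \<sigma>" "\<Psi> (i, f, b) \<otimes> \<Psi> (i, f, \<not> b) = \<tau>" if "i \<in> I" for i f b
    unfolding \<Psi>_def using rep(1)[OF that] klein_act_mult_flip_first klein_act_mult_flip_second by simp_all
  ultimately show ?thesis
    using that by blast
qed

end

section \<open>Cyclic layouts\<close>

lemma cyclic_position_eqI:
  fixes p p' :: nat
  assumes "0 < s" "s \<le> n" "p div s = p' div s" "p mod n = p' mod n"
  shows "p = p'"
proof -
  have "q - r < s" if "q div s = r div s" for q r :: nat
    using div_mult_mod_eq[of q s] div_mult_mod_eq[of r s] mod_less_divisor[OF assms(1), of q]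
    unfolding that by linarith
  moreover have "n dvd q - r" if "q mod n = r mod n" for q r :: nat
    using that by (metis diff_is_0_eq' dvd_0_right linorder_le_cases mod_eq_dvd_iff_nat)
  ultimately have "p' - p = 0" "p - p' = 0"
    using assms by (metis dvd_imp_le le_trans linorder_not_le neq0_conv)+
  then show ?thesis by simp
qed

lemma card_row_positions:
  fixes s :: nat
  assumes "i < m"
  shows "card {p \<in> {..<m * s}. p div s = i} = s"
proof (cases "s = 0")
  case False
  have bound: "i * s + s \<le> m * s"
    using assms by (metis add.commute mult_Suc mult_le_mono1 Suc_leI)
  have row: "p div s = i \<longleftrightarrow> i * s \<le> p \<and> p < i * s + s" for p
  proof
    assume i: "p div s = i"
    have "p div s * s + p mod s = p" "p mod s < s"
      using False by simp_all
    then show "i * s \<le> p \<and> p < i * s + s"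
      unfolding i by linarith
  next
    assume "i * s \<le> p \<and> p < i * s + s"
    then show "p div s = i"
      by (intro div_nat_eqI) (simp_all add: mult.commute)
  qed
  have "{p \<in> {..<m * s}. p div s = i} = {i * s..<i * s + s}"
  proof (rule Set.set_eqI)
    fix p
    show "p \<in> {p \<in> {..<m * s}. p div s = i} \<longleftrightarrow> p \<in> {i * s..<i * s + s}"
      using row[of p] bound by auto
  qed
  then show ?thesis by simp
qed simp

lemma card_column_positions:
  fixes n :: nat
  assumes "j < n"
  shows "card {p \<in> {..<n * k}. p mod n = j} = k"
proof -
  have "{p \<in> {..<n * k}. p mod n = j} = (\<lambda>r. j + n * r) ` {..<k}"
  proof (intro equalityI subsetI)
    fix p assume "p \<in> {p \<in> {..<n * k}. p mod n = j}"
    then have "p = j + n * (p div n)" "p div n < k"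
      using div_mult_mod_eq[of p n] assms by (auto simp: div_less_iff_less_mult mult.commute)
    then show "p \<in> (\<lambda>r. j + n * r) ` {..<k}" by blast
  next
    fix p assume "p \<in> (\<lambda>r. j + n * r) ` {..<k}"
    then obtain r where "r < k" "p = j + n * r" by auto
    moreover have "j + n * r < n * Suc r" using assms by simp
    moreover have "n * Suc r \<le> n * k" using \<open>r < k\<close> by (intro mult_le_mono2) simp
    ultimately show "p \<in> {p \<in> {..<n * k}. p mod n = j}" using assms by simp
  qed
  moreover have "inj_on (\<lambda>r. j + n * r) {..<k}"
    using assms by (auto simp: inj_on_def)
  ultimately show ?thesis
    by (simp add: card_image)
qed

lemma (in comm_monoid) finprod_the_image:
  assumes "inj_on h P" "\<And>p. p \<in> P \<Longrightarrow> F (h p) = Some (g p)" "g \<in> P \<rightarrow> carrier G"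
  shows "finprod G (\<lambda>j. the (F j)) (h ` P) = finprod G g P"
proof -
  have "finprod G (\<lambda>j. the (F j)) (h ` P) = finprod G (\<lambda>p. the (F (h p))) P"
    using assms by (intro finprod_reindex) auto
  also have "\<dots> = finprod G g P"
    using assms by (intro finprod_cong') auto
  finally show ?thesis .
qed

definition cyclic_layout ::
  "nat \<Rightarrow> nat \<Rightarrow> nat \<Rightarrow> (nat \<times> nat \<Rightarrow> 'a) \<Rightarrow> nat \<Rightarrow> nat \<Rightarrow> nat \<Rightarrow> 'a option" where
  "cyclic_layout s n N \<Phi> t i j =
     (if \<exists>p<N. p div s = i \<and> p mod n = j
      then Some (\<Phi> (t, THE p. p < N \<and> p div s = i \<and> p mod n = j)) else None)"

lemma cyclic_layout_position:
  assumes "0 < s" "s \<le> n" "p < N"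
  shows "cyclic_layout s n N \<Phi> t (p div s) (p mod n) = Some (\<Phi> (t, p))"
proof -
  have "(THE p'. p' < N \<and> p' div s = p div s \<and> p' mod n = p mod n) = p"
    using assms by (intro the_equality) (auto intro: cyclic_position_eqI)
  then show ?thesis
    using assms unfolding cyclic_layout_def by auto
qed

lemma cyclic_layout_eq_Some:
  assumes "0 < s" "s \<le> n" "cyclic_layout s n N \<Phi> t i j = Some g"
  obtains p where "p < N" "i = p div s" "j = p mod n" "g = \<Phi> (t, p)"
proof -
  obtain p where p: "p < N" "i = p div s" "j = p mod n"
    using assms(3) unfolding cyclic_layout_def by (auto split: if_splits)
  moreover have "g = \<Phi> (t, p)"
    using assms(3) unfolding p(2,3) cyclic_layout_position[OF assms(1,2) p(1)] by simp
  ultimately show ?thesis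
    using that by blast
qed

lemma cyclic_layout_row:
  assumes "0 < s" "s \<le> n"
  shows "{j. j < n \<and> cyclic_layout s n N \<Phi> t i j \<noteq> None} = (\<lambda>p. p mod n) ` {p \<in> {..<N}. p div s = i}"
proof (intro equalityI subsetI)
  fix j assume "j \<in> {j. j < n \<and> cyclic_layout s n N \<Phi> t i j \<noteq> None}"
  then obtain p where "p < N" "i = p div s" "j = p mod n"
    by (auto elim: cyclic_layout_eq_Some[OF assms])
  then show "j \<in> (\<lambda>p. p mod n) ` {p \<in> {..<N}. p div s = i}"
    by blast
next
  fix j assume "j \<in> (\<lambda>p. p mod n) ` {p \<in> {..<N}. p div s = i}"
  then obtain p where p: "p < N" "i = p div s" "j = p mod n"
    by blast
  then show "j \<in> {j. j < n \<and> cyclic_layout s n N \<Phi> t i j \<noteq> None}"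
    unfolding p(2,3) using assms cyclic_layout_position[OF assms p(1)] mod_less_divisor[of n p] by blast
qed

lemma cyclic_layout_column:
  assumes "0 < s" "s \<le> n" "N \<le> m * s"
  shows "{i. i < m \<and> cyclic_layout s n N \<Phi> t i j \<noteq> None} = (\<lambda>p. p div s) ` {p \<in> {..<N}. p mod n = j}"
proof (intro equalityI subsetI)
  fix i assume "i \<in> {i. i < m \<and> cyclic_layout s n N \<Phi> t i j \<noteq> None}"
  then obtain p where "p < N" "i = p div s" "j = p mod n"
    by (auto elim: cyclic_layout_eq_Some[OF assms(1,2)])
  then show "i \<in> (\<lambda>p. p div s) ` {p \<in> {..<N}. p mod n = j}"
    by blast
next
  fix i assume "i \<in> (\<lambda>p. p div s) ` {p \<in> {..<N}. p mod n = j}"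
  then obtain p where p: "p < N" "i = p div s" "j = p mod n"
    by blast
  have "p div s < m"
    using p(1) assms by (simp add: div_less_iff_less_mult)
  then show "i \<in> {i. i < m \<and> cyclic_layout s n N \<Phi> t i j \<noteq> None}"
    unfolding p(2,3) using cyclic_layout_position[OF assms(1,2) p(1)] by blast
qed

locale paired_cyclic_layout = comm_group +
  fixes m n s k c :: nat and \<Phi> :: "nat \<times> nat \<Rightarrow> 'a" and H V :: "nat \<Rightarrow> nat" and \<omega> \<delta> :: 'a
  assumes s_pos: "0 < s" and s_le_n: "s \<le> n" and dimensions: "m * s = n * k"
    and bij: "bij_betw \<Phi> ({..<c} \<times> {..<n * k}) (carrier G)"
    and H_involution: "fixpoint_free_involution_on H {..<n * k}"
    and H_row: "\<And>p. p < n * k \<Longrightarrow> H p div s = p div s"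
    and V_involution: "fixpoint_free_involution_on V {..<n * k}"
    and V_column: "\<And>p. p < n * k \<Longrightarrow> V p mod n = p mod n"
    and \<omega>_closed: "\<omega> \<in> carrier G" and H_pairs: "\<And>t p. t < c \<Longrightarrow> p < n * k \<Longrightarrow> \<Phi> (t, p) \<otimes> \<Phi> (t, H p) = \<omega>"
    and \<delta>_closed: "\<delta> \<in> carrier G" and V_pairs: "\<And>t p. t < c \<Longrightarrow> p < n * k \<Longrightarrow> \<Phi> (t, p) \<otimes> \<Phi> (t, V p) = \<delta>"
begin

abbreviation layout :: "nat \<Rightarrow> nat \<Rightarrow> nat \<Rightarrow> 'a option" where
  "layout \<equiv> cyclic_layout s n (n * k) \<Phi>"

lemma \<Phi>_closed: "t < c \<Longrightarrow> p < n * k \<Longrightarrow> \<Phi> (t, p) \<in> carrier G"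
  using bij by (auto simp: bij_betw_def)

lemma layout_position: "p < n * k \<Longrightarrow> layout t (p div s) (p mod n) = Some (\<Phi> (t, p))"
  using s_pos s_le_n by (rule cyclic_layout_position)

lemma row_filled: "{j. j < n \<and> layout t i j \<noteq> None} = (\<lambda>p. p mod n) ` {p \<in> {..<n * k}. p div s = i}"
  using s_pos s_le_n by (rule cyclic_layout_row)

lemma column_filled: "{i. i < m \<and> layout t i j \<noteq> None} = (\<lambda>p. p div s) ` {p \<in> {..<n * k}. p mod n = j}"
  using s_pos s_le_n eq_imp_le[OF dimensions[symmetric]] by (rule cyclic_layout_column)

lemma inj_on_row: "inj_on (\<lambda>p. p mod n) {p \<in> {..<n * k}. p div s = i}"
  by (auto simp: inj_on_def intro: cyclic_position_eqI[OF s_pos s_le_n])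

lemma inj_on_column: "inj_on (\<lambda>p. p div s) {p \<in> {..<n * k}. p mod n = j}"
  by (auto simp: inj_on_def intro: cyclic_position_eqI[OF s_pos s_le_n])

lemma card_row_filled: "i < m \<Longrightarrow> card {j. j < n \<and> layout t i j \<noteq> None} = s"
  unfolding row_filled card_image[OF inj_on_row] using card_row_positions[of i m s] dimensions by simp

lemma card_column_filled: "j < n \<Longrightarrow> card {i. i < m \<and> layout t i j \<noteq> None} = k"
  unfolding column_filled card_image[OF inj_on_column] using card_column_positions[of j n k] by simp

lemma row_prod:
  assumes "t < c" "i < m"
  shows "finprod G (\<lambda>j. the (layout t i j)) {j. j < n \<and> layout t i j \<noteq> None} = \<omega> [^] (s div 2)"
proof -
  have "finprod G (\<lambda>j. the (layout t i j)) {j. j < n \<and> layout t i j \<noteq> None}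
      = finprod G (\<lambda>p. \<Phi> (t, p)) {p \<in> {..<n * k}. p div s = i}"
    unfolding row_filled using inj_on_row layout_position \<Phi>_closed assms(1)
    by (intro finprod_the_image) auto
  also have "\<dots> = \<omega> [^] (card {p \<in> {..<n * k}. p div s = i} div 2)"
    using H_involution H_row H_pairs \<omega>_closed \<Phi>_closed assms(1)
    by (intro finprod_fixpoint_free_involution[where \<pi> = H] fixpoint_free_involution_on_fibre) auto
  finally show ?thesis
    using card_row_positions[OF assms(2), of s] dimensions by simp
qed

lemma column_prod:
  assumes "t < c" "j < n"
  shows "finprod G (\<lambda>i. the (layout t i j)) {i. i < m \<and> layout t i j \<noteq> None} = \<delta> [^] (k div 2)"
proof -
  have "finprod G (\<lambda>i. the (layout t i j)) {i. i < m \<and> layout t i j \<noteq> None}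
      = finprod G (\<lambda>p. \<Phi> (t, p)) {p \<in> {..<n * k}. p mod n = j}"
    unfolding column_filled using inj_on_column layout_position \<Phi>_closed assms(1)
    by (intro finprod_the_image) auto
  also have "\<dots> = \<delta> [^] (card {p \<in> {..<n * k}. p mod n = j} div 2)"
    using V_involution V_column V_pairs \<delta>_closed \<Phi>_closed assms(1)
    by (intro finprod_fixpoint_free_involution[where \<pi> = V] fixpoint_free_involution_on_fibre) auto
  finally show ?thesis
    using card_column_positions[OF assms(2), of k] by simp
qed

lemma layout_SomeE:
  assumes "layout t i j = Some g"
  obtains p where "p < n * k" "i = p div s" "j = p mod n" "g = \<Phi> (t, p)"
  using assms s_pos s_le_n by (auto elim: cyclic_layout_eq_Some)

lemma unique_cell:
  assumes "g \<in> carrier G"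
  shows "\<exists>!x. x \<in> filled_cells layout c m n \<and> (case x of (t, i, j) \<Rightarrow> layout t i j = Some g)"
proof -
  have "g \<in> \<Phi> ` ({..<c} \<times> {..<n * k})"
    using bij assms by (simp add: bij_betw_def)
  then obtain t p where tp: "t < c" "p < n * k" "g = \<Phi> (t, p)"
    by auto
  have "p div s < m"
    using tp(2) dimensions s_pos by (metis div_less_iff_less_mult)
  moreover have "x = (t, p div s, p mod n)"
    if x_filled: "x \<in> filled_cells layout c m n" and x_g: "case x of (t, i, j) \<Rightarrow> layout t i j = Some g" for x
  proof -
    obtain t' i' j' where x: "x = (t', i', j')" "t' < c" "layout t' i' j' = Some g"
      using x_filled x_g unfolding filled_cells_def by auto
    obtain p' where p': "p' < n * k" "i' = p' div s" "j' = p' mod n" "g = \<Phi> (t', p')"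
      using x(3) by (rule layout_SomeE)
    have "(t', p') = (t, p)"
      using bij tp x(2) p' unfolding bij_betw_def inj_on_def by blast
    then show ?thesis
      using x p' by simp
  qed
  ultimately show ?thesis
    using tp s_le_n s_pos layout_position unfolding filled_cells_def
    by (intro ex1I[of _ "(t, p div s, p mod n)"]) auto
qed

lemma is_MRS_layout: "is_MRS G m n s k c layout"
  unfolding is_MRS_def
proof (intro conjI allI impI ballI)
  show "card (carrier G) = n * k * c"
    using bij_betw_same_card[OF bij] by (simp add: mult.commute)
next
  fix t i j g assume "t < c" "layout t i j = Some g"
  then show "g \<in> carrier G"
    using \<Phi>_closed by (auto elim: layout_SomeE)
next
  show "\<exists>\<omega>\<in>carrier G. \<exists>\<delta>\<in>carrier G.
      (\<forall>t<c. \<forall>i<m. finprod G (\<lambda>j. the (layout t i j)) {j. j < n \<and> layout t i j \<noteq> None} = \<omega>) \<and>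
      (\<forall>t<c. \<forall>j<n. finprod G (\<lambda>i. the (layout t i j)) {i. i < m \<and> layout t i j \<noteq> None} = \<delta>)"
    using row_prod column_prod \<omega>_closed \<delta>_closed by blast
next
  fix t i assume "t < c" "i < m"
  show "card {j. j < n \<and> layout t i j \<noteq> None} = s"
    by (rule card_row_filled[OF \<open>i < m\<close>])
next
  fix t j assume "t < c" "j < n"
  show "card {i. i < m \<and> layout t i j \<noteq> None} = k"
    by (rule card_column_filled[OF \<open>j < n\<close>])
qed (rule unique_cell)

end

section \<open>Flipping binary digits of positions\<close>

definition flip_digit :: "nat \<Rightarrow> nat \<Rightarrow> nat" where
  "flip_digit w p = w * (if even (p div w) then p div w + 1 else p div w - 1) + p mod w"

lemma flip_digit_div_mod:
  assumes "0 < w"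
  shows "flip_digit w p div w = (if even (p div w) then p div w + 1 else p div w - 1)"
    and "flip_digit w p mod w = p mod w"
  using assms unfolding flip_digit_def by simp_all

lemma flip_digit_flip_digit:
  assumes "0 < w"
  shows "flip_digit w (flip_digit w p) = p"
proof -
  have "(if even (flip_digit w p div w) then flip_digit w p div w + 1 else flip_digit w p div w - 1) = p div w"
    unfolding flip_digit_div_mod[OF assms] by (auto elim: oddE)
  then show ?thesis
    unfolding flip_digit_def[of w "flip_digit w p"] flip_digit_div_mod(2)[OF assms]
    by (simp add: flip_digit_div_mod[OF assms])
qed

lemma flip_digit_neq:
  assumes "0 < w"
  shows "flip_digit w p \<noteq> p"
proof -
  have "(if even (p div w) then p div w + 1 else p div w - 1) \<noteq> p div w"
    by (auto elim: oddE)
  then show ?thesis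
    using flip_digit_div_mod(1)[OF assms, of p] by metis
qed

lemma odd_flip_digit_div_iff:
  assumes "0 < w"
  shows "odd (flip_digit w p div w) \<longleftrightarrow> even (p div w)"
  unfolding flip_digit_div_mod(1)[OF assms] by (auto elim: oddE)

lemma flip_digit_div_eq:
  assumes "0 < w" "2 * w dvd v"
  shows "flip_digit w p div v = p div v"
proof -
  obtain r where "v = 2 * w * r"
    using assms(2) by (rule dvdE)
  then have v: "v = w * (2 * r)"
    by simp
  have "flip_digit w p div w div 2 = p div w div 2"
    unfolding flip_digit_div_mod(1)[OF assms(1)] by (auto elim: oddE)
  then show ?thesis
    unfolding v div_mult2_eq by simp
qed

lemma flip_digit_mod_eq:
  assumes "0 < w" "v dvd w"
  shows "flip_digit w p mod v = p mod v"
  using flip_digit_div_mod(2)[OF assms(1), of p] mod_mod_cancel[OF assms(2)] by metis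

lemma fixpoint_free_involution_on_flip_digit:
  assumes "0 < w" "2 * w dvd N"
  shows "fixpoint_free_involution_on (flip_digit w) {..<N}"
proof -
  have "flip_digit w p < N" if "p < N" for p
    using flip_digit_div_eq[OF assms, of p] that by (simp add: div_eq_0_iff)
  then show ?thesis
    unfolding fixpoint_free_involution_on_def
    using flip_digit_flip_digit[OF assms(1)] flip_digit_neq[OF assms(1)] by simp
qed

text \<open>Positions with the same block index differ only in the two digits flipped by
  \<open>flip_digit 1\<close> and \<open>flip_digit (2 * h)\<close>, i.e. in the parities of \<open>p\<close> and \<open>p div (2 * h)\<close>.\<close>

definition block_index :: "nat \<Rightarrow> nat \<Rightarrow> nat" where
  "block_index h p = p div (4 * h) * h + p div 2 mod h"

lemma mod_double_div_two: "(p :: nat) mod (2 * h) div 2 = p div 2 mod h"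
  using mod_mult2_eq[of p 2 h] by simp

lemma block_index_div_mod:
  assumes "0 < h"
  shows "block_index h p div h = p div (4 * h)" "block_index h p mod h = p div 2 mod h"
  using assms unfolding block_index_def by simp_all

lemma div_quadruple: "(x :: nat) div (4 * h) = x div (2 * h) div 2"
proof -
  have "4 * h = 2 * h * 2"
    by simp
  then show ?thesis
    by (simp only: div_mult2_eq)
qed

lemma eq_if_div_mod_eq:
  fixes a b d :: nat
  assumes "a div d = b div d" "a mod d = b mod d"
  shows "a = b"
proof -
  have "a = a div d * d + a mod d"
    by simp
  also have "\<dots> = b div d * d + b mod d"
    by (simp only: assms)
  also have "\<dots> = b"
    by simp
  finally show ?thesis .
qed

lemma mod_two_eq_if_parity_eq: "(odd (a :: nat) \<longleftrightarrow> odd b) \<Longrightarrow> a mod 2 = b mod 2"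
  by (simp add: mod2_eq_if)

lemma position_eqI:
  assumes "0 < h" "block_index h p = block_index h p'"
    and "odd p \<longleftrightarrow> odd p'" "odd (p div (2 * h)) \<longleftrightarrow> odd (p' div (2 * h))"
  shows "p = p'"
proof -
  note block = block_index_div_mod[OF assms(1)]
  have "p div (2 * h) = p' div (2 * h)"
  proof (rule eq_if_div_mod_eq)
    show "p div (2 * h) div 2 = p' div (2 * h) div 2"
      using block(1)[of p] block(1)[of p'] assms(2) by (simp add: div_quadruple)
    show "p div (2 * h) mod 2 = p' div (2 * h) mod 2"
      using assms(4) by (rule mod_two_eq_if_parity_eq)
  qed
  then have "p div 2 div h = p' div 2 div h"
    by (simp add: div_mult2_eq)
  moreover have "p div 2 mod h = p' div 2 mod h"
    using block(2)[of p] block(2)[of p'] assms(2) by simp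
  ultimately have "p div 2 = p' div 2"
    by (rule eq_if_div_mod_eq)
  then show ?thesis
    using mod_two_eq_if_parity_eq[OF assms(3)] by (rule eq_if_div_mod_eq)
qed

lemma block_index_less:
  assumes "0 < h" "4 * h dvd N" "p < N"
  shows "block_index h p < N div 4"
proof -
  obtain L where N: "N = 4 * h * L"
    using assms(2) by (rule dvdE)
  have "p div (4 * h) < L"
    using assms(1,3) N by (simp add: div_less_iff_less_mult mult.commute)
  then have "(p div (4 * h) + 1) * h \<le> L * h"
    by (intro mult_le_mono1) simp
  moreover have "p div 2 mod h < h"
    using assms(1) by simp
  ultimately have "block_index h p < L * h"
    unfolding block_index_def by (simp add: algebra_simps)
  then show ?thesis
    using N by (simp add: mult.commute)
qed

lemma block_index_flip_digit:
  assumes "0 < h"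
  shows "block_index h (flip_digit 1 p) = block_index h p"
    and "block_index h (flip_digit (2 * h) p) = block_index h p"
proof -
  show "block_index h (flip_digit 1 p) = block_index h p"
    unfolding block_index_def by (simp add: flip_digit_div_eq)
  have "flip_digit (2 * h) p div 2 mod h = p div 2 mod h"
    using flip_digit_mod_eq[of "2 * h" "2 * h" p] assms by (simp flip: mod_double_div_two)
  then show "block_index h (flip_digit (2 * h) p) = block_index h p"
    using assms unfolding block_index_def by (simp add: flip_digit_div_eq)
qed

lemma parity_flip_digit:
  assumes "0 < h"
  shows "odd (flip_digit 1 p) \<longleftrightarrow> even p"
    and "odd (flip_digit 1 p div (2 * h)) \<longleftrightarrow> odd (p div (2 * h))"
    and "odd (flip_digit (2 * h) p) \<longleftrightarrow> odd p"
    and "odd (flip_digit (2 * h) p div (2 * h)) \<longleftrightarrow> even (p div (2 * h))"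
  using odd_flip_digit_div_iff[of 1 p] flip_digit_div_eq[of 1 "2 * h" p]
    flip_digit_mod_eq[of "2 * h" 2 p] odd_flip_digit_div_iff[of "2 * h" p] assms
  by (simp_all add: odd_iff_mod_2_eq_one)

definition position_code :: "nat \<Rightarrow> nat \<times> nat \<Rightarrow> (nat \<times> nat) \<times> bool \<times> bool" where
  "position_code h = (\<lambda>(t, p). ((t, block_index h p), odd p, odd (p div (2 * h))))"

lemma position_code_flip_digit:
  assumes "0 < h"
  shows "position_code h (t, flip_digit 1 p) = ((t, block_index h p), \<not> odd p, odd (p div (2 * h)))"
    and "position_code h (t, flip_digit (2 * h) p) = ((t, block_index h p), odd p, \<not> odd (p div (2 * h)))"
  using block_index_flip_digit[OF assms] parity_flip_digit[OF assms]
  by (simp_all add: position_code_def)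

lemma bij_betw_position_code:
  fixes c :: nat
  assumes "0 < h" "4 * h dvd N"
  shows "bij_betw (position_code h) ({..<c} \<times> {..<N}) (({..<c} \<times> {..<N div 4}) \<times> UNIV)"
proof (rule bij_betw_if_inj_on_card_eq)
  show "inj_on (position_code h) ({..<c} \<times> {..<N})"
  proof (rule inj_onI)
    fix x y :: "nat \<times> nat"
    assume "x \<in> {..<c} \<times> {..<N}" "y \<in> {..<c} \<times> {..<N}" and eq: "position_code h x = position_code h y"
    obtain t p t' p' where xy: "x = (t, p)" "y = (t', p')"
      by fastforce
    show "x = y"
      using eq position_eqI[OF assms(1), of p p'] unfolding xy position_code_def by simp
  qed
  show "position_code h ` ({..<c} \<times> {..<N}) \<subseteq> ({..<c} \<times> {..<N div 4}) \<times> UNIV"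
    using block_index_less[OF assms] by (auto simp: position_code_def)
  have "N = N div 4 * 4"
    using assms(2) by (metis dvd_div_mult_self dvd_mult_left mult.assoc)
  then show "card ({..<c} \<times> {..<N}) = card (({..<c} \<times> {..<N div 4}) \<times> (UNIV :: (bool \<times> bool) set))"
    by (simp add: card_cartesian_product card_UNIV_bool flip: UNIV_Times_UNIV)
qed simp

lemma (in comm_group) exists_klein_enumeration:
  assumes "finite (carrier G)" "finite I" "order G = 4 * card I"
  obtains \<sigma> \<tau> \<Psi> where "\<sigma> \<in> carrier G" "\<tau> \<in> carrier G" "bij_betw \<Psi> (I \<times> UNIV) (carrier G)"
    "\<And>i f b. i \<in> I \<Longrightarrow> \<Psi> (i, f, b) \<otimes> \<Psi> (i, \<not> f, b) = \<sigma>"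
    "\<And>i f b. i \<in> I \<Longrightarrow> \<Psi> (i, f, b) \<otimes> \<Psi> (i, f, \<not> b) = \<tau>"
proof -
  obtain \<sigma> \<tau> where "\<sigma> \<in> carrier G" "\<tau> \<in> carrier G" "\<sigma> \<noteq> \<tau>" "\<sigma> \<otimes> \<sigma> = \<tau> \<otimes> \<tau>"
    "\<forall>x\<in>carrier G. x \<otimes> x \<noteq> \<sigma> \<and> x \<otimes> x \<noteq> \<tau>"
    using exists_distinct_nonsquares_with_equal_squares[OF assms(1)] assms(3) by auto
  then interpret nonsquare_pair G \<sigma> \<tau>
    by unfold_locales auto
  show thesis
  proof (rule exists_klein_equivariant_bij[OF assms])
    fix \<Psi> assume "bij_betw \<Psi> (I \<times> UNIV) (carrier G)"
      "\<And>i f b. i \<in> I \<Longrightarrow> \<Psi> (i, f, b) \<otimes> \<Psi> (i, \<not> f, b) = \<sigma>"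
      "\<And>i f b. i \<in> I \<Longrightarrow> \<Psi> (i, f, b) \<otimes> \<Psi> (i, f, \<not> b) = \<tau>"
    then show thesis
      by (rule that[OF \<sigma>_closed \<tau>_closed])
  qed
qed

lemma exists_column_flip_weight:
  fixes n k :: nat
  assumes "0 < n" "even k" "4 dvd n * k"
  obtains h where "0 < h" "n dvd 2 * h" "4 * h dvd n * k"
proof (cases "even n")
  case True
  then obtain h where "n = 2 * h"
    by blast
  moreover obtain l where "k = 2 * l"
    using assms(2) by blast
  ultimately show ?thesis
    using assms(1) that[of h] by simp
next
  case False
  then have "coprime 4 n"
    by (metis coprime_left_2_iff_odd coprime_mult_left_iff numeral_Bit0_eq_double)
  then have "4 dvd k"
    using assms(3) by (simp add: coprime_dvd_mult_right_iff)
  then show ?thesis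
    using assms(1) that[of n] by (simp add: mult_dvd_mono)
qed

lemma (in comm_group) MRS_exists_if_column_flip_weight:
  assumes G: "finite (carrier G)" "order G = n * k * c"
    and s: "0 < s" "s \<le> n" "even s" and dimensions: "m * s = n * k"
    and h: "0 < h" "n dvd 2 * h" "4 * h dvd n * k"
  shows "MRS_exists G m n s k c"
proof -
  have "4 dvd n * k"
    using h(3) by (rule dvd_trans[OF dvd_triv_left])
  then obtain q where q: "n * k = 4 * q"
    by (rule dvdE)
  obtain \<sigma> \<tau> \<Psi> where \<sigma>: "\<sigma> \<in> carrier G" and \<tau>: "\<tau> \<in> carrier G"
    and \<Psi>: "bij_betw \<Psi> (({..<c} \<times> {..<q}) \<times> UNIV) (carrier G)"
      "\<And>i f b. i \<in> {..<c} \<times> {..<q} \<Longrightarrow> \<Psi> (i, f, b) \<otimes> \<Psi> (i, \<not> f, b) = \<sigma>"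
      "\<And>i f b. i \<in> {..<c} \<times> {..<q} \<Longrightarrow> \<Psi> (i, f, b) \<otimes> \<Psi> (i, f, \<not> b) = \<tau>"
    by (rule exists_klein_enumeration[OF G(1), of "{..<c} \<times> {..<q}"]) (simp_all add: G(2) q)
  have code: "bij_betw (position_code h) ({..<c} \<times> {..<n * k}) (({..<c} \<times> {..<q}) \<times> UNIV)"
    using bij_betw_position_code[OF h(1,3), of c] q by simp
  have block: "(t, block_index h p) \<in> {..<c} \<times> {..<q}" if "t < c" "p < n * k" for t p
    using block_index_less[OF h(1,3) that(2)] that(1) q by simp
  have "2 * (2 * h) dvd n * k" "2 * 1 dvd n * k"
    using h(3) q by (simp_all add: mult.assoc)
  interpret paired_cyclic_layout G m n s k c "\<Psi> \<circ> position_code h" "flip_digit 1" "flip_digit (2 * h)" \<sigma> \<tau>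
  proof
    show "bij_betw (\<Psi> \<circ> position_code h) ({..<c} \<times> {..<n * k}) (carrier G)"
      using code \<Psi>(1) by (rule bij_betw_trans)
    show "fixpoint_free_involution_on (flip_digit 1) {..<n * k}"
      "fixpoint_free_involution_on (flip_digit (2 * h)) {..<n * k}"
      using \<open>2 * 1 dvd n * k\<close> \<open>2 * (2 * h) dvd n * k\<close> h(1)
      by (simp_all add: fixpoint_free_involution_on_flip_digit)
    show "flip_digit 1 p div s = p div s" for p
      using s(3) by (simp add: flip_digit_div_eq)
    show "flip_digit (2 * h) p mod n = p mod n" for p
      using h(1,2) by (simp add: flip_digit_mod_eq)
    show "(\<Psi> \<circ> position_code h) (t, p) \<otimes> (\<Psi> \<circ> position_code h) (t, flip_digit 1 p) = \<sigma>"
      if "t < c" "p < n * k" for t p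
      unfolding comp_def position_code_flip_digit[OF h(1)]
      using \<Psi>(2)[OF block[OF that], of "odd p"] by (simp add: position_code_def)
    show "(\<Psi> \<circ> position_code h) (t, p) \<otimes> (\<Psi> \<circ> position_code h) (t, flip_digit (2 * h) p) = \<tau>"
      if "t < c" "p < n * k" for t p
      unfolding comp_def position_code_flip_digit[OF h(1)]
      using \<Psi>(3)[OF block[OF that], of _ "odd (p div (2 * h))"] by (simp add: position_code_def)
  qed (use s dimensions \<sigma> \<tau> in simp_all)
  show ?thesis
    unfolding MRS_exists_def using is_MRS_layout by blast
qed

theorem proposition5p15:
  fixes G :: "('a, 'b) monoid_scheme" and m n s k c :: nat
  assumes "2 \<le> s" and "s \<le> n" and "2 \<le> k" and "k \<le> m" and "m * s = n * k"
    and "1 \<le> c"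
    and "comm_group G" and "finite (carrier G)" and "card (carrier G) = n * k * c"
    and "(s mod 4 = 0 \<and> k mod 4 = 0)
         \<or> (s mod 4 = 2 \<and> k mod 4 = 0)
         \<or> (s mod 4 = 0 \<and> k mod 4 = 2)
         \<or> (s mod 4 = 2 \<and> k mod 4 = 2 \<and> even m \<and> even n)"
  shows "MRS_exists G m n s k c"
proof -
  interpret comm_group G by fact
  \<comment> \<open>The hypothesis \<open>even m\<close> of the last case is not used; there it follows from \<open>m * s = n * k\<close>.\<close>
  have parity: "even s" "even k" "4 dvd k \<or> 4 dvd s \<or> even n"
    using assms(10) by presburger+
  have "4 dvd n * k"
    using parity(3)
  proof (elim disjE)
    assume "4 dvd s"
    then show ?thesis
      using assms(5) by (metis dvd_mult)
  next
    assume "even n"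
    then show ?thesis
      using parity(2) mult_dvd_mono[of 2 n 2 k] by simp
  qed simp
  then obtain h where "0 < h" "n dvd 2 * h" "4 * h dvd n * k"
    using exists_column_flip_weight[of n k] assms(1,2) parity(2) by auto
  then show ?thesis
    using MRS_exists_if_column_flip_weight[of n k c s m h] assms(1,2,5,8,9) parity(1)
    by (simp add: order_def)
qed

end
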